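(* In the model described in the context, for every $s\ge0$ and $z\in\mathbb{R}^2$ the inter-cluster interference $I_b$ satisfies $$\mathbb{E}\big[e^{-sI_b}\big]=\exp\Big(-\lambda_{\text{pb}}\int_{\mathbb{R}^2}\big(1-e^{-\bar cD\,q(s,y,z)}\big)\,dy\Big),$$ where $$q(s,y,z)=\int_{\mathbb{O}}\frac{s\beta\eta g}{s\beta\eta g+|x|^{\alpha_1}|x+y-z|^{\alpha_2}}\,f(|x|)\,dx,\qquad \mathbb{O}=\Big\{x\in\mathbb{R}^2:\ |x|\le\Big(\frac{\eta g(1-\beta D)}{P_c}\Big)^{1/\alpha_1}\Big\}.$$
   Context: Parameters: power-beacon density $\lambda_{\text{pb}}>0$, $\bar c>0$, duty cycle $D\in(0,1]$, reflection coefficient $\beta\in(0,1]$, $\eta>0$, $g>0$, circuit power $P_c>0$, path-loss exponents $\alpha_1,\alpha_2>0$. The function $f$ is one of: (Matern) $f(r)=\frac{1}{\pi a^2}$ for $0\le r\le a$, $0$ otherwise ($a>0$); (Thomas) $f(r)=\frac{1}{2\pi\sigma^2}e^{-r^2/(2\sigma^2)}$ ($\sigma>0$); $x\mapsto f(|x|)$ is a probability density on $\mathbb{R}^2$. Define $\ell(P)=P$ if $P\ge P_c/(1-\beta D)$ and $\ell(P)=0$ otherwise. Model: the power beacons (other than the one serving the typical node) form a homogeneous Poisson point process $\Pi'$ of density $\lambda_{\text{pb}}$ on $\mathbb{R}^2$; each $Y\in\Pi'$ carries an independent cluster $\mathcal{N}_Y$ of active backscatter nodes, a Poisson point process with intensity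 measure $\bar cDf(|x-Y|)\,dx$. Fading variables $h_X$ are i.i.d. exponential with mean 1, independent of everything else. For a receiver at $z$, the inter-cluster interference is $I_b=\sum_{Y\in\Pi'}\sum_{X\in\mathcal{N}_Y}\beta\,\ell(\eta g|X-Y|^{-\alpha_1})h_X|X-z|^{-\alpha_2}$. *)

theory Defs
  imports "HOL-Probability.Probability"
begin

definition is_PPP :: "'w measure \<Rightarrow> ('w \<Rightarrow> 'a set) \<Rightarrow> 'a measure \<Rightarrow> bool" where
  "is_PPP M Phi mu \<longleftrightarrow>
     (\<forall>B \<in> sets mu. emeasure mu B < \<infinity> \<longrightarrow>
        (\<lambda>w. card (Phi w \<inter> B)) \<in> measurable M (count_space UNIV) \<and>
        (AE w in M. finite (Phi w \<inter> B)) \<and>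
        (\<forall>n::nat. measure M {w \<in> space M. card (Phi w \<inter> B) = n}
                 = (measure mu B) ^ n / fact n * exp (- measure mu B))) \<and>
     (\<forall>(I::nat set) B. finite I \<longrightarrow> disjoint_family_on B I \<longrightarrow>
        (\<forall>i\<in>I. B i \<in> sets mu \<and> emeasure mu (B i) < \<infinity>) \<longrightarrow>
        prob_space.indep_vars M (\<lambda>_. count_space UNIV) (\<lambda>i w. card (Phi w \<inter> B i)) I)"

definition matern_f :: "real \<Rightarrow> real \<Rightarrow> real" where
  "matern_f a r = (if 0 \<le> r \<and> r \<le> a then 1 / (pi * a\<^sup>2) else 0)"

definition thomas_f :: "real \<Rightarrow> real \<Rightarrow> real" where
  "thomas_f \<sigma> r = 1 / (2 * pi * \<sigma>\<^sup>2) * exp (- r\<^sup>2 / (2 * \<sigma>\<^sup>2))"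

text \<open>Harvested power after the activation threshold: ell(P) = P if P >= Pc/(1 - beta D),
  else 0.  When beta D = 1 the threshold is +infinity, so ell = 0.\<close>
definition ell :: "real \<Rightarrow> real \<Rightarrow> real \<Rightarrow> real \<Rightarrow> real" where
  "ell Pc \<beta> D P = (if \<beta> * D < 1 \<and> P \<ge> Pc / (1 - \<beta> * D) then P else 0)"

definition enn_exp_neg :: "ennreal \<Rightarrow> ennreal" where
  "enn_exp_neg x = (if x = \<infinity> then 0 else ennreal (exp (- enn2real x)))"

definition regionO :: "real \<Rightarrow> real \<Rightarrow> real \<Rightarrow> real \<Rightarrow> real \<Rightarrow> real \<Rightarrow> (real^2) set" where
  "regionO \<eta> g \<beta> D Pc \<alpha>1 =
     {x. norm x \<le> (\<eta> * g * (1 - \<beta> * D) / Pc) powr (1 / \<alpha>1)}"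

definition qfun :: "real \<Rightarrow> real \<Rightarrow> real \<Rightarrow> real \<Rightarrow> real \<Rightarrow> real \<Rightarrow> real
                    \<Rightarrow> (real \<Rightarrow> real) \<Rightarrow> real \<Rightarrow> real^2 \<Rightarrow> real^2 \<Rightarrow> real" where
  "qfun \<eta> g \<beta> D Pc \<alpha>1 \<alpha>2 f s y z =
     (\<integral>x \<in> regionO \<eta> g \<beta> D Pc \<alpha>1.
        (s * \<beta> * \<eta> * g / (s * \<beta> * \<eta> * g + norm x powr \<alpha>1 * norm (x + y - z) powr \<alpha>2))
          * f (norm x) \<partial>lborel)"

text \<open>Index type for the independent components of the model: the parent process,
  the k-th cluster, and the fading variable of the j-th node of the k-th cluster.\<close>
datatype model_idx = Par | Clu nat | Fad nat nat

end

theory Submission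
  imports Defs
begin

text \<open>Conditionally on the beacons and the cluster points, the fading variables are independent
  unit exponentials, so a node with path gain c contributes the factor
  \<open>1 / (1 + s c) = exp (- ln (1 + s c))\<close>. The Laplace functional of a Poisson process with intensity \<open>\<mu>\<close>, which sends a function u to
  \<open>exp (- \<integral> (1 - exp (- u)) d\<mu>)\<close>, then turns the product over one cluster into \<open>exp (- cbar D q)\<close>;
  the activation threshold in \<open>ell\<close> is what restricts the integral to the region O. As the
  clusters are independent, the product over the beacons is again a Laplace functional, now of
  the beacon process. The Laplace functional itself follows from the Poisson law and the
  independence of the counts in disjoint sets for simple functions of bounded support, and
  extends to all measurable u by monotone convergence.\<close>

lemma enn_exp_neg_ennreal: "0 \<le> r \<Longrightarrow> enn_exp_neg (ennreal r) = ennreal (exp (- r))"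
  by (simp add: enn_exp_neg_def)

lemma enn_exp_neg_top [simp]: "enn_exp_neg top = 0"
  by (simp add: enn_exp_neg_def)

lemma enn_exp_neg_zero [simp]: "enn_exp_neg 0 = 1"
  by (simp add: enn_exp_neg_def)

lemma enn_exp_neg_add: "enn_exp_neg (a + b) = enn_exp_neg a * enn_exp_neg b"
proof (cases "a = \<infinity> \<or> b = \<infinity>")
  case True
  then show ?thesis by (auto simp: enn_exp_neg_def)
next
  case False
  then obtain x y where "a = ennreal x" "b = ennreal y" "0 \<le> x" "0 \<le> y"
    by (cases a; cases b) auto
  then show ?thesis
    by (simp add: enn_exp_neg_ennreal exp_diff exp_minus field_simps ennreal_mult[symmetric]
        del: ennreal_plus flip: ennreal_plus)
qed

lemma enn_exp_neg_sum: "enn_exp_neg (\<Sum>i\<in>I. f i) = (\<Prod>i\<in>I. enn_exp_neg (f i))"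
  by (induction I rule: infinite_finite_induct) (auto simp: enn_exp_neg_add)

lemma enn_exp_neg_le_1: "enn_exp_neg x \<le> 1"
  by (auto simp: enn_exp_neg_def)

lemma borel_measurable_enn_exp_neg [measurable]: "enn_exp_neg \<in> borel_measurable borel"
  unfolding enn_exp_neg_def by measurable

lemma enn_exp_neg_antimono: "a \<le> b \<Longrightarrow> enn_exp_neg b \<le> enn_exp_neg a"
proof (cases "b = \<infinity>")
  case False
  assume "a \<le> b"
  moreover from this False obtain x y where "a = ennreal x" "b = ennreal y" "0 \<le> x" "0 \<le> y"
    by (cases a; cases b) (auto simp: top_unique)
  ultimately show ?thesis by (simp add: enn_exp_neg_ennreal ennreal_le_iff)
qed simp

lemma ennreal_one_minus_enn_exp_neg: "1 - enn_exp_neg (ennreal r) = ennreal (1 - exp (- r))"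
proof (cases "0 \<le> r")
  case True
  then show ?thesis
    by (simp add: enn_exp_neg_ennreal ennreal_minus[symmetric] del: ennreal_1 flip: ennreal_1)
qed (simp add: ennreal_neg)

lemma INF_enn_exp_neg_unbounded:
  assumes "(SUP i. f i) = \<infinity>"
  shows "(INF i. enn_exp_neg (f i)) = 0"
proof (rule antisym[OF ennreal_le_epsilon zero_le])
  fix e :: real assume e: "0 < e"
  define n where "n = max 0 (- ln e)"
  have "ennreal n < (SUP i. f i)" unfolding assms infinity_ennreal_def by (rule ennreal_less_top)
  then obtain i where i: "ennreal n < f i" by (auto simp: less_SUP_iff)
  have "(INF i. enn_exp_neg (f i)) \<le> enn_exp_neg (f i)" by (rule INF_lower) auto
  also have "\<dots> \<le> enn_exp_neg (ennreal n)" using i by (intro enn_exp_neg_antimono) auto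
  also have "\<dots> = ennreal (exp (- n))" by (rule enn_exp_neg_ennreal) (simp add: n_def)
  also have "\<dots> \<le> ennreal e"
  proof -
    have "exp (- n) \<le> exp (ln e)" unfolding n_def by auto
    with e show ?thesis by (simp add: ennreal_leI)
  qed
  finally show "(INF i. enn_exp_neg (f i)) \<le> 0 + ennreal e" by simp
qed

lemma enn_exp_neg_SUP:
  assumes inc: "incseq f"
  shows "enn_exp_neg (SUP i. f i) = (INF i. enn_exp_neg (f i))"
proof (cases "(SUP i. f i) = \<infinity>")
  case True
  then show ?thesis
    unfolding INF_enn_exp_neg_unbounded[OF True] True infinity_ennreal_def by simp
next
  case False
  let ?L = "SUP i. f i"
  obtain r where r: "?L = ennreal r" "0 \<le> r"
    using False by (cases ?L) (auto simp: infinity_ennreal_def)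
  have fin: "f i \<noteq> \<infinity>" for i
    using False SUP_upper[of i UNIV f] by (metis UNIV_I infinity_ennreal_def top_unique)
  have lim: "(\<lambda>i. enn2real (f i)) \<longlonglongrightarrow> enn2real ?L"
    using LIMSEQ_SUP[OF inc] r by (intro tendsto_enn2real) auto
  have "(\<lambda>i. ennreal (exp (- enn2real (f i)))) \<longlonglongrightarrow> ennreal (exp (- enn2real ?L))"
    by (intro tendsto_ennrealI tendsto_intros lim)
  moreover have "(\<lambda>i. ennreal (exp (- enn2real (f i)))) = (\<lambda>i. enn_exp_neg (f i))"
    using fin by (auto simp: enn_exp_neg_def)
  moreover have "ennreal (exp (- enn2real ?L)) = enn_exp_neg ?L"
    using False by (simp add: enn_exp_neg_def)
  ultimately have "(\<lambda>i. enn_exp_neg (f i)) \<longlonglongrightarrow> enn_exp_neg ?L" by simp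
  moreover have "decseq (\<lambda>i. enn_exp_neg (f i))"
    using inc by (auto simp: decseq_def incseq_def intro: enn_exp_neg_antimono)
  ultimately show ?thesis
    using LIMSEQ_INF LIMSEQ_unique by metis
qed

lemma poisson_laplace:
  fixes N :: "'w \<Rightarrow> nat"
  assumes M: "prob_space M"
    and N: "N \<in> measurable M (count_space UNIV)"
    and m: "0 \<le> m" and a: "0 \<le> a"
    and law: "\<And>n. measure M {w \<in> space M. N w = n} = m ^ n / fact n * exp (- m)"
  shows "(\<integral>\<^sup>+ w. ennreal (exp (- (a * real (N w)))) \<partial>M) = ennreal (exp (- (m * (1 - exp (- a)))))"
proof -
  interpret prob_space M by fact
  let ?F = "\<lambda>n::nat. ennreal (exp (- (a * real n)))"
  let ?A = "\<lambda>n. {w \<in> space M. N w = n}"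
  have A: "?A n \<in> sets M" for n
    using N by measurable
  have "(\<integral>\<^sup>+ w. ?F (N w) \<partial>M) = (\<integral>\<^sup>+ w. (\<Sum>n. ?F n * indicator (?A n) w) \<partial>M)"
  proof (rule nn_integral_cong)
    fix w assume w: "w \<in> space M"
    have "(\<lambda>n. ?F n * indicator (?A n) w) = (\<lambda>n. if n = N w then ?F n else 0)"
      using w by (auto simp: indicator_def)
    then show "?F (N w) = (\<Sum>n. ?F n * indicator (?A n) w)"
      using sums_single[of "N w" ?F] by (simp add: sums_iff)
  qed
  also have "\<dots> = (\<Sum>n. \<integral>\<^sup>+ w. ?F n * indicator (?A n) w \<partial>M)"
    by (rule nn_integral_suminf) (use A in auto)
  also have "\<dots> = (\<Sum>n. ennreal (exp (- m) * ((m * exp (- a)) ^ n / fact n)))"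
  proof (rule suminf_cong)
    fix n
    have "exp (- (a * real n)) * (m ^ n / fact n * exp (- m)) = exp (- m) * ((m * exp (- a)) ^ n / fact n)"
      by (simp add: power_mult_distrib exp_of_nat_mult[symmetric] exp_minus field_simps mult.commute)
    then show "(\<integral>\<^sup>+ w. ?F n * indicator (?A n) w \<partial>M) = ennreal (exp (- m) * ((m * exp (- a)) ^ n / fact n))"
      using A by (simp add: nn_integral_cmult_indicator emeasure_eq_measure law ennreal_mult[symmetric] m)
  qed
  also have "\<dots> = ennreal (exp (- m) * exp (m * exp (- a)))"
  proof (rule suminf_ennreal_eq)
    show "(\<lambda>n. exp (- m) * ((m * exp (- a)) ^ n / fact n)) sums (exp (- m) * exp (m * exp (- a)))"
      using sums_mult[OF exp_converges[of "m * exp (- a)"], of "exp (- m)"]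
      by (simp add: divide_inverse scaleR_conv_of_real mult.commute)
  qed (use m in simp)
  also have "exp (- m) * exp (m * exp (- a)) = exp (- (m * (1 - exp (- a))))"
    by (simp add: exp_add[symmetric] algebra_simps)
  finally show ?thesis .
qed

lemma PPP_count_laplace:
  assumes M: "prob_space M" and PPP: "is_PPP M Phi mu"
    and B: "B \<in> sets mu" "emeasure mu B < \<infinity>" and a: "a < \<infinity>"
  shows "(\<integral>\<^sup>+ w. enn_exp_neg (a * of_nat (card (Phi w \<inter> B))) \<partial>M)
       = enn_exp_neg ((1 - enn_exp_neg a) * emeasure mu B)"
proof -
  obtain r where r: "a = ennreal r" "0 \<le> r" using a by (cases a) auto
  have count: "(\<lambda>w. card (Phi w \<inter> B)) \<in> measurable M (count_space UNIV)"
    and law: "\<And>n. measure M {w \<in> space M. card (Phi w \<inter> B) = n}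
                  = (measure mu B) ^ n / fact n * exp (- measure mu B)"
    using PPP B unfolding is_PPP_def by blast+
  have "(\<integral>\<^sup>+ w. enn_exp_neg (a * of_nat (card (Phi w \<inter> B))) \<partial>M)
      = (\<integral>\<^sup>+ w. ennreal (exp (- (r * real (card (Phi w \<inter> B))))) \<partial>M)"
    using r by (simp add: enn_exp_neg_ennreal ennreal_of_nat_eq_real_of_nat flip: ennreal_mult)
  also have "\<dots> = ennreal (exp (- (measure mu B * (1 - exp (- r)))))"
    by (rule poisson_laplace[OF M count measure_nonneg r(2) law])
  also have "\<dots> = enn_exp_neg ((1 - enn_exp_neg a) * emeasure mu B)"
  proof -
    have "(1 - enn_exp_neg a) * emeasure mu B = ennreal (measure mu B * (1 - exp (- r)))"
      using B r by (simp add: ennreal_one_minus_enn_exp_neg emeasure_eq_ennreal_measure less_top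
          ennreal_mult mult.commute)
    then show ?thesis using r by (simp add: enn_exp_neg_ennreal)
  qed
  finally show ?thesis .
qed

lemma sum_indicator_vimage_values:
  fixes u :: "'a \<Rightarrow> ennreal" and c :: "ennreal \<Rightarrow> ennreal"
  assumes "finite (u ` UNIV)" and "c 0 = 0"
  shows "(\<Sum>v\<in>u ` UNIV - {0}. c v * indicator (u -` {v}) x) = c (u x)"
proof -
  have "(\<Sum>v\<in>u ` UNIV - {0}. c v * indicator (u -` {v}) x)
      = (\<Sum>v\<in>u ` UNIV - {0}. if u x = v then c v else 0)"
    by (intro sum.cong) (auto simp: indicator_def)
  also have "\<dots> = c (u x)"
    using assms by (simp add: sum.delta)
  finally show ?thesis .
qed

lemma nn_integral_finite_range:
  fixes u :: "'a \<Rightarrow> ennreal"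
  assumes fin: "finite (u ` UNIV)" and c: "c 0 = 0" and sets: "\<And>v. u -` {v} \<in> sets mu"
  shows "(\<integral>\<^sup>+ x. c (u x) \<partial>mu) = (\<Sum>v\<in>u ` UNIV - {0}. c v * emeasure mu (u -` {v}))"
proof -
  have "(\<integral>\<^sup>+ x. c (u x) \<partial>mu) = (\<integral>\<^sup>+ x. (\<Sum>v\<in>u ` UNIV - {0}. c v * indicator (u -` {v}) x) \<partial>mu)"
    by (intro nn_integral_cong) (simp add: sum_indicator_vimage_values[OF fin, of c] c)
  also have "\<dots> = (\<Sum>v\<in>u ` UNIV - {0}. c v * emeasure mu (u -` {v}))"
    using sets by (simp add: nn_integral_sum nn_integral_cmult_indicator)
  finally show ?thesis .
qed

lemma nn_integral_count_space_finite_range: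
  fixes u :: "'a \<Rightarrow> ennreal"
  assumes fin: "finite (u ` UNIV)" and P: "\<And>v. v \<in> u ` UNIV - {0} \<Longrightarrow> finite (P \<inter> u -` {v})"
  shows "(\<integral>\<^sup>+ x. u x * indicator P x \<partial>count_space UNIV)
       = (\<Sum>v\<in>u ` UNIV - {0}. v * of_nat (card (P \<inter> u -` {v})))"
proof -
  have "(\<integral>\<^sup>+ x. u x * indicator P x \<partial>count_space UNIV)
      = (\<integral>\<^sup>+ x. (\<Sum>v\<in>u ` UNIV - {0}. v * indicator (P \<inter> u -` {v}) x) \<partial>count_space UNIV)"
  proof (rule nn_integral_cong)
    fix x
    have "(\<Sum>v\<in>u ` UNIV - {0}. v * indicator (P \<inter> u -` {v}) x)
        = (\<Sum>v\<in>u ` UNIV - {0}. (v * indicator P x) * indicator (u -` {v}) x)"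
      by (intro sum.cong) (auto simp: indicator_def)
    then show "u x * indicator P x = (\<Sum>v\<in>u ` UNIV - {0}. v * indicator (P \<inter> u -` {v}) x)"
      using sum_indicator_vimage_values[OF fin, of "\<lambda>v. v * indicator P x"] by simp
  qed
  also have "\<dots> = (\<Sum>v\<in>u ` UNIV - {0}. v * of_nat (card (P \<inter> u -` {v})))"
    using P by (auto simp: nn_integral_sum nn_integral_cmult_indicator intro!: sum.cong)
  finally show ?thesis .
qed

lemma PPP_laplace_simple:
  fixes u :: "'a \<Rightarrow> ennreal"
  assumes M: "prob_space M" and PPP: "is_PPP M Phi mu"
    and fin: "finite (u ` UNIV)" and u_fin: "\<And>x. u x < \<infinity>" and sets: "\<And>v. u -` {v} \<in> sets mu"
    and F: "emeasure mu F < \<infinity>" "F \<in> sets mu" "\<And>x. x \<notin> F \<Longrightarrow> u x = 0"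
  shows "(\<integral>\<^sup>+ w. enn_exp_neg (\<Sum>v\<in>u ` UNIV - {0}. v * of_nat (card (Phi w \<inter> u -` {v}))) \<partial>M)
       = enn_exp_neg (\<integral>\<^sup>+ x. (1 - enn_exp_neg (u x)) \<partial>mu)"
proof -
  interpret prob_space M by fact
  define V where "V = u ` UNIV - {0}"
  have Vfin: "finite V" using fin by (simp add: V_def)
  have finite_level: "emeasure mu (u -` {v}) < \<infinity>" if "v \<in> V" for v
  proof -
    have "u -` {v} \<subseteq> F" using that F(3) by (auto simp: V_def)
    then show ?thesis using emeasure_mono[OF _ F(2)] F(1) by (meson le_less_trans)
  qed
  \<comment> \<open>\<open>is_PPP\<close> asserts independence of counts only for families indexed by naturals\<close>
  obtain enum where enum: "bij_betw enum {..<card V} V"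
    using ex_bij_betw_nat_finite[OF Vfin] atLeast0LessThan by metis
  define L where "L i w = enn_exp_neg (enum i * of_nat (card (Phi w \<inter> u -` {enum i})))" for i w
  have enum_V: "enum i \<in> V" if "i < card V" for i
    using enum that by (auto simp: bij_betw_def)
  have "disjoint_family_on (\<lambda>i. u -` {enum i}) {..<card V}"
    using enum by (auto simp: disjoint_family_on_def bij_betw_def inj_on_def)
  then have "indep_vars (\<lambda>_. count_space UNIV) (\<lambda>i w. card (Phi w \<inter> u -` {enum i})) {..<card V}"
    using PPP sets finite_level enum_V unfolding is_PPP_def by simp
  then have indep: "indep_vars (\<lambda>_. borel) L {..<card V}"
    unfolding L_def by (rule indep_vars_compose2) simp
  have "(\<integral>\<^sup>+ w. enn_exp_neg (\<Sum>v\<in>V. v * of_nat (card (Phi w \<inter> u -` {v}))) \<partial>M)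
      = (\<integral>\<^sup>+ w. (\<Prod>i<card V. L i w) \<partial>M)"
    by (simp add: enn_exp_neg_sum L_def flip: prod.reindex_bij_betw[OF enum])
  also have "\<dots> = (\<Prod>i<card V. \<integral>\<^sup>+ w. L i w \<partial>M)"
    by (rule indep_vars_nn_integral[OF _ indep]) auto
  also have "\<dots> = (\<Prod>i<card V. enn_exp_neg ((1 - enn_exp_neg (enum i)) * emeasure mu (u -` {enum i})))"
    unfolding L_def
    using enum_V u_fin finite_level
    by (intro prod.cong refl PPP_count_laplace[OF M PPP sets]) (force simp: V_def)+
  also have "\<dots> = enn_exp_neg (\<Sum>v\<in>V. (1 - enn_exp_neg v) * emeasure mu (u -` {v}))"
    by (simp add: enn_exp_neg_sum flip: prod.reindex_bij_betw[OF enum])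
  also have "(\<Sum>v\<in>V. (1 - enn_exp_neg v) * emeasure mu (u -` {v})) = (\<integral>\<^sup>+ x. (1 - enn_exp_neg (u x)) \<partial>mu)"
    unfolding V_def by (rule nn_integral_finite_range[OF fin _ sets, symmetric]) simp
  finally show ?thesis unfolding V_def .
qed

lemma simple_approximation_vanishing_outside:
  fixes u :: "'a \<Rightarrow> ennreal"
  assumes u: "u \<in> borel_measurable mu"
    and E: "incseq E" "\<And>i. E i \<in> sets mu" "(\<Union>i. E i) = UNIV"
  obtains v where "\<And>i. simple_function mu (v i)" "\<And>i x. v i x < \<infinity>"
    "\<And>i x. x \<notin> E i \<Longrightarrow> v i x = 0" "\<And>i j x. i \<le> j \<Longrightarrow> v i x \<le> v j x" "\<And>x. (SUP i. v i x) = u x"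
proof -
  obtain w where w: "\<And>i. simple_function mu (w i)" "incseq w" "\<And>i x. w i x < top" "\<And>x. (SUP i. w i x) = u x"
    using borel_measurable_implies_simple_function_sequence'[OF u] by blast
  define v where "v i x = w i x * indicator (E i) x" for i x
  show thesis
  proof (rule that[of v])
    show "simple_function mu (v i)" for i
      unfolding v_def by (intro simple_function_mult w simple_function_indicator E)
    show "v i x < \<infinity>" for i x
      using w(3)[of i x] by (auto simp: v_def indicator_def)
    show "x \<notin> E i \<Longrightarrow> v i x = 0" for i x
      by (simp add: v_def)
    show "v i x \<le> v j x" if "i \<le> j" for i j x
    proof -
      have "w i x \<le> w j x" using w(2) that by (auto simp: incseq_def le_fun_def)
      moreover have "indicator (E i) x \<le> (indicator (E j) x :: ennreal)"
        using E(1) that by (auto simp: incseq_def indicator_def)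
      ultimately show ?thesis unfolding v_def by (intro mult_mono) auto
    qed
    show "(SUP i. v i x) = u x" for x
    proof (rule antisym)
      show "(SUP i. v i x) \<le> u x"
        unfolding w(4)[of x, symmetric] by (intro SUP_mono) (auto simp: v_def indicator_def)
      obtain j where j: "x \<in> E j" using E(3) by auto
      have "w i x \<le> v (max i j) x" for i
      proof -
        have "x \<in> E (max i j)" using E(1) j by (meson incseq_def max.cobounded2 subsetD)
        then show ?thesis using w(2) by (simp add: v_def incseq_def le_fun_def)
      qed
      then show "u x \<le> (SUP i. v i x)"
        unfolding w(4)[of x, symmetric] by (meson SUP_least SUP_upper2 UNIV_I)
    qed
  qed
qed

lemma PPP_sum_simple_function:
  fixes u :: "'a \<Rightarrow> ennreal"
  assumes M: "prob_space M" and PPP: "is_PPP M Phi mu"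
    and fin: "finite (u ` UNIV)" and sets: "\<And>c. u -` {c} \<in> sets mu"
    and finite_level: "\<And>c. c \<noteq> 0 \<Longrightarrow> emeasure mu (u -` {c}) < \<infinity>"
  shows "AE w in M. (\<integral>\<^sup>+ x. u x * indicator (Phi w) x \<partial>count_space UNIV)
                   = (\<Sum>c\<in>u ` UNIV - {0}. c * of_nat (card (Phi w \<inter> u -` {c})))"
    and "(\<lambda>w. \<Sum>c\<in>u ` UNIV - {0}. c * of_nat (card (Phi w \<inter> u -` {c}))) \<in> borel_measurable M"
proof -
  interpret prob_space M by fact
  have "AE w in M. \<forall>c\<in>u ` UNIV - {0}. finite (Phi w \<inter> u -` {c})"
    using PPP sets finite_level fin unfolding is_PPP_def by (intro AE_finite_allI) auto
  then show "AE w in M. (\<integral>\<^sup>+ x. u x * indicator (Phi w) x \<partial>count_space UNIV)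
                   = (\<Sum>c\<in>u ` UNIV - {0}. c * of_nat (card (Phi w \<inter> u -` {c})))"
    by eventually_elim (rule nn_integral_count_space_finite_range[OF fin], blast)
  have "(\<lambda>w. card (Phi w \<inter> u -` {c})) \<in> measurable M (count_space UNIV)" if "c \<noteq> 0" for c
    using PPP sets finite_level[OF that] unfolding is_PPP_def by blast
  then show "(\<lambda>w. \<Sum>c\<in>u ` UNIV - {0}. c * of_nat (card (Phi w \<inter> u -` {c}))) \<in> borel_measurable M"
    by (auto intro!: borel_measurable_sum measurable_compose[where N="count_space UNIV"])
qed

lemma (in prob_space) nn_integral_enn_exp_neg_SUP:
  assumes meas: "\<And>i. S i \<in> borel_measurable M" and mono: "AE w in M. incseq (\<lambda>i. S i w)"
  shows "(\<integral>\<^sup>+ w. enn_exp_neg (SUP i. S i w) \<partial>M) = (INF i. \<integral>\<^sup>+ w. enn_exp_neg (S i w) \<partial>M)"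
proof -
  have "(\<integral>\<^sup>+ w. enn_exp_neg (SUP i. S i w) \<partial>M) = (\<integral>\<^sup>+ w. (INF i. enn_exp_neg (S i w)) \<partial>M)"
    using mono by (intro nn_integral_cong_AE) (auto elim!: AE_mp simp: enn_exp_neg_SUP)
  also have "\<dots> = (INF i. \<integral>\<^sup>+ w. enn_exp_neg (S i w) \<partial>M)"
  proof (rule nn_integral_monotone_convergence_INF_AE')
    show "AE w in M. enn_exp_neg (S (Suc i) w) \<le> enn_exp_neg (S i w)" for i
      using mono by eventually_elim (metis enn_exp_neg_antimono incseq_SucD)
    show "(\<integral>\<^sup>+ w. enn_exp_neg (S 0 w) \<partial>M) < \<infinity>"
      using nn_integral_mono[of M "\<lambda>w. enn_exp_neg (S 0 w)" "\<lambda>_. 1"] enn_exp_neg_le_1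
      by (simp add: le_less_trans emeasure_space_1)
  qed (use meas in measurable)
  finally show ?thesis .
qed

lemma INF_enn_exp_neg_laplace_exponent:
  fixes v :: "nat \<Rightarrow> 'a \<Rightarrow> ennreal"
  assumes meas: "\<And>i. v i \<in> borel_measurable mu" and mono: "\<And>i j x. i \<le> j \<Longrightarrow> v i x \<le> v j x"
  shows "(INF i. enn_exp_neg (\<integral>\<^sup>+ x. (1 - enn_exp_neg (v i x)) \<partial>mu))
       = enn_exp_neg (\<integral>\<^sup>+ x. (1 - enn_exp_neg (SUP i. v i x)) \<partial>mu)"
proof -
  have "(INF i. enn_exp_neg (\<integral>\<^sup>+ x. (1 - enn_exp_neg (v i x)) \<partial>mu))
      = enn_exp_neg (SUP i. \<integral>\<^sup>+ x. (1 - enn_exp_neg (v i x)) \<partial>mu)"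
    by (rule enn_exp_neg_SUP[symmetric])
       (auto simp: incseq_def intro!: nn_integral_mono ennreal_minus_mono enn_exp_neg_antimono mono)
  also have "(SUP i. \<integral>\<^sup>+ x. (1 - enn_exp_neg (v i x)) \<partial>mu) = (\<integral>\<^sup>+ x. (SUP i. 1 - enn_exp_neg (v i x)) \<partial>mu)"
    using meas
    by (intro nn_integral_monotone_convergence_SUP[symmetric])
       (auto simp: incseq_def le_fun_def intro!: ennreal_minus_mono enn_exp_neg_antimono mono)
  also have "\<dots> = (\<integral>\<^sup>+ x. (1 - enn_exp_neg (SUP i. v i x)) \<partial>mu)"
    using mono by (simp add: ennreal_INF_const_minus enn_exp_neg_SUP incseq_def)
  finally show ?thesis .
qed

lemma PPP_laplace_functional:
  fixes u :: "'a \<Rightarrow> ennreal"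
  assumes M: "prob_space M" and PPP: "is_PPP M Phi mu" and sp: "space mu = UNIV"
    and E: "incseq E" "\<And>i. E i \<in> sets mu" "\<And>i. emeasure mu (E i) < \<infinity>" "(\<Union>i. E i) = UNIV"
    and u: "u \<in> borel_measurable mu"
  shows "(\<integral>\<^sup>+ w. enn_exp_neg (\<integral>\<^sup>+ x. u x * indicator (Phi w) x \<partial>count_space UNIV) \<partial>M)
       = enn_exp_neg (\<integral>\<^sup>+ x. (1 - enn_exp_neg (u x)) \<partial>mu)"
proof -
  interpret prob_space M by fact
  obtain v where v: "\<And>i. simple_function mu (v i)" "\<And>i x. v i x < \<infinity>"
    "\<And>i x. x \<notin> E i \<Longrightarrow> v i x = 0" and v_mono: "\<And>i j x. i \<le> j \<Longrightarrow> v i x \<le> v j x"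
    and v_SUP: "\<And>x. (SUP i. v i x) = u x"
    using simple_approximation_vanishing_outside[OF u E(1,2,4)] by blast
  have v_fin: "finite (v i ` UNIV)" and v_sets: "v i -` {c} \<in> sets mu" for i c
    using simple_functionD[OF v(1), of i] sp by simp_all
  have finite_level: "emeasure mu (v i -` {c}) < \<infinity>" if "c \<noteq> 0" for i c
  proof -
    have "v i -` {c} \<subseteq> E i" using that v(3) by auto
    then show ?thesis using emeasure_mono[OF _ E(2)] E(3) by (meson le_less_trans)
  qed
  define N where "N i w = (\<integral>\<^sup>+ x. v i x * indicator (Phi w) x \<partial>count_space UNIV)" for i w
  define S where "S i w = (\<Sum>c\<in>v i ` UNIV - {0}. c * of_nat (card (Phi w \<inter> v i -` {c})))" for i w
  note counts = PPP_sum_simple_function[OF M PPP v_fin v_sets finite_level]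
  have N_eq_S: "AE w in M. \<forall>i. N i w = S i w"
    unfolding AE_all_countable N_def S_def using counts(1) by blast
  have S_meas: "S i \<in> borel_measurable M" for i
    unfolding S_def using counts(2) .
  have N_mono: "incseq (\<lambda>i. N i w)" for w
    unfolding N_def by (auto simp: incseq_def intro!: nn_integral_mono mult_right_mono v_mono)
  have N_SUP: "(\<integral>\<^sup>+ x. u x * indicator (Phi w) x \<partial>count_space UNIV) = (SUP i. N i w)" for w
  proof -
    have "(\<integral>\<^sup>+ x. u x * indicator (Phi w) x \<partial>count_space UNIV)
        = (\<integral>\<^sup>+ x. (SUP i. v i x * indicator (Phi w) x) \<partial>count_space UNIV)"
      by (simp add: v_SUP[symmetric] SUP_mult_right_ennreal)
    also have "\<dots> = (SUP i. N i w)"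
      unfolding N_def by (rule nn_integral_monotone_convergence_SUP)
        (auto simp: incseq_def le_fun_def intro!: mult_right_mono v_mono)
    finally show ?thesis .
  qed
  have "(\<integral>\<^sup>+ w. enn_exp_neg (\<integral>\<^sup>+ x. u x * indicator (Phi w) x \<partial>count_space UNIV) \<partial>M)
      = (\<integral>\<^sup>+ w. enn_exp_neg (SUP i. S i w) \<partial>M)"
    using N_eq_S by (intro nn_integral_cong_AE) (auto elim!: AE_mp simp: N_SUP)
  also have "\<dots> = (INF i. \<integral>\<^sup>+ w. enn_exp_neg (S i w) \<partial>M)"
  proof (rule nn_integral_enn_exp_neg_SUP[OF S_meas])
    show "AE w in M. incseq (\<lambda>i. S i w)"
      using N_eq_S
    proof eventually_elim
      case (elim w)
      then show ?case using N_mono[of w] by simp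
    qed
  qed
  also have "\<dots> = (INF i. enn_exp_neg (\<integral>\<^sup>+ x. (1 - enn_exp_neg (v i x)) \<partial>mu))"
    unfolding S_def by (intro INF_cong refl PPP_laplace_simple[OF M PPP v_fin v(2) v_sets E(3,2)] v(3))
  also have "\<dots> = enn_exp_neg (\<integral>\<^sup>+ x. (1 - enn_exp_neg (u x)) \<partial>mu)"
    using borel_measurable_simple_function[OF v(1)] v_mono
    by (simp add: INF_enn_exp_neg_laplace_exponent v_SUP)
  finally show ?thesis .
qed

lemma PPP_laplace_functional_density:
  fixes d u :: "'a::euclidean_space \<Rightarrow> ennreal"
  assumes M: "prob_space M" and PPP: "is_PPP M Phi (density lborel d)"
    and d: "d \<in> borel_measurable borel" and C: "\<And>x. d x \<le> ennreal C"
    and u: "u \<in> borel_measurable borel"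
  shows "(\<integral>\<^sup>+ w. enn_exp_neg (\<integral>\<^sup>+ x. u x * indicator (Phi w) x \<partial>count_space UNIV) \<partial>M)
       = enn_exp_neg (\<integral>\<^sup>+ x. d x * (1 - enn_exp_neg (u x)) \<partial>lborel)"
proof -
  have "emeasure (density lborel d) (cball 0 (real i)) < \<infinity>" for i
  proof -
    have "emeasure (density lborel d) (cball 0 (real i)) = (\<integral>\<^sup>+ x. d x * indicator (cball 0 (real i)) x \<partial>lborel)"
      using d by (simp add: emeasure_density)
    also have "\<dots> \<le> (\<integral>\<^sup>+ x. ennreal C * indicator (cball (0::'a) (real i)) x \<partial>lborel)"
      by (intro nn_integral_mono mult_right_mono) (simp_all add: C)
    also have "\<dots> < \<infinity>"
      using emeasure_lborel_cball_finite[of "0::'a" "real i"]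
      by (simp add: nn_integral_cmult_indicator ennreal_mult_less_top less_top)
    finally show ?thesis .
  qed
  moreover have "(\<Union>i. cball 0 (real i)) = (UNIV :: 'a set)"
    by (auto simp: dist_norm) (meson real_arch_simple)
  ultimately have "(\<integral>\<^sup>+ w. enn_exp_neg (\<integral>\<^sup>+ x. u x * indicator (Phi w) x \<partial>count_space UNIV) \<partial>M)
       = enn_exp_neg (\<integral>\<^sup>+ x. (1 - enn_exp_neg (u x)) \<partial>density lborel d)"
    by (intro PPP_laplace_functional[OF M PPP]) (auto simp: incseq_def u)
  also have "(\<integral>\<^sup>+ x. (1 - enn_exp_neg (u x)) \<partial>density lborel d) = (\<integral>\<^sup>+ x. d x * (1 - enn_exp_neg (u x)) \<partial>lborel)"
    using d u by (subst nn_integral_density) auto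
  finally show ?thesis .
qed

lemma borel_measurable_sum_lessThan_count:
  fixes F :: "nat \<Rightarrow> 'a \<Rightarrow> ennreal"
  assumes N: "N \<in> measurable M (count_space UNIV)" and F: "\<And>j. F j \<in> borel_measurable M"
  shows "(\<lambda>x. \<Sum>j<N x. F j x) \<in> borel_measurable M"
proof -
  have "(\<Sum>j<n. F j x) = (\<Sum>j. if j < n then F j x else 0)" for n x
    by (subst suminf_finite[of "{..<n}"]) auto
  moreover have "{x \<in> space M. j < N x} \<in> sets M" for j
    using N by measurable
  ultimately show ?thesis
    using F by (simp add: borel_measurable_suminf_order measurable_If)
qed

lemma measurable_sigma_of_vimage_subset:
  assumes f: "f \<in> \<Omega> \<rightarrow> space N" and sub: "sets (vimage_algebra \<Omega> f N) \<subseteq> G" and G: "G \<subseteq> Pow \<Omega>"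
  shows "f \<in> measurable (sigma \<Omega> G) N"
proof -
  have "sets (vimage_algebra \<Omega> f N) \<subseteq> sets (sigma \<Omega> G)"
    using sub G by (auto simp: sets_measure_of intro: sigma_sets.Basic)
  then show ?thesis
    using measurable_mono[of N N "vimage_algebra \<Omega> f N" "sigma \<Omega> G"] measurable_vimage_algebra1[OF f]
    by (auto simp: space_measure_of_conv)
qed

lemma (in prob_space) indep_vars_collect_sigma:
  fixes S :: "'i \<Rightarrow> 'a set set" and I :: "'j \<Rightarrow> 'i set"
  assumes ind: "indep_sets S UNIV"
    and Sev: "\<And>i. S i \<subseteq> events" and Sint: "\<And>i. Int_stable (S i)"
    and disj: "disjoint_family_on I J"
    and X: "\<And>j. j \<in> J \<Longrightarrow> X j \<in> measurable (sigma (space M) (\<Union>i\<in>I j. S i)) (N j)"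
  shows "indep_vars N X J"
  unfolding indep_vars_def2
proof (intro conjI ballI)
  have sub: "(\<Union>i\<in>I j. S i) \<subseteq> Pow (space M)" for j
    using Sev sets.sets_into_space by blast
  have sub2: "sigma_sets (space M) (\<Union>i\<in>I j. S i) \<subseteq> events" for j
    using Sev by (intro sets.sigma_sets_subset) auto
  fix j assume j: "j \<in> J"
  show "random_variable (N j) (X j)"
    by (rule measurable_from_subalg[OF _ X[OF j]])
       (auto simp: subalgebra_def space_measure_of_conv sets_measure_of[OF sub] sub2)
next
  have sub: "(\<Union>i\<in>I j. S i) \<subseteq> Pow (space M)" for j
    using Sev sets.sets_into_space by blast
  have "indep_sets (\<lambda>j. sigma_sets (space M) (\<Union>i\<in>I j. S i)) J"
    by (rule indep_sets_collect_sigma[OF indep_sets_mono_index[OF _ ind] Sint disj]) auto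
  then show "indep_sets (\<lambda>i. {X i -` A \<inter> space M |A. A \<in> sets (N i)}) J"
  proof (rule indep_sets_mono_sets)
    fix j assume j: "j \<in> J"
    show "{X j -` A \<inter> space M |A. A \<in> sets (N j)} \<subseteq> sigma_sets (space M) (\<Union>i\<in>I j. S i)"
      using measurable_sets[OF X[OF j]]
      by (auto simp: space_measure_of_conv sets_measure_of[OF sub])
  qed
qed

lemma (in prob_space) indep_pair_collect_sigma:
  fixes S :: "'i \<Rightarrow> 'a set set"
  assumes ind: "indep_sets S UNIV"
    and Sev: "\<And>i. S i \<subseteq> events" and Sint: "\<And>i. Int_stable (S i)"
    and disj: "I1 \<inter> I2 = {}"
    and A: "A \<in> measurable (sigma (space M) (\<Union>i\<in>I1. S i)) MA"
    and B: "B \<in> measurable (sigma (space M) (\<Union>i\<in>I2. S i)) MB"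
    and a: "a \<in> sets MA" and b: "b \<in> sets MB"
  shows "prob ((A -` a \<inter> space M) \<inter> (B -` b \<inter> space M)) = prob (A -` a \<inter> space M) * prob (B -` b \<inter> space M)"
proof -
  have sub: "(\<Union>i\<in>I. S i) \<subseteq> Pow (space M)" for I
    using Sev sets.sets_into_space by blast
  define I where "I p = (if p then I1 else I2)" for p
  define E where "E p = (if p then A -` a \<inter> space M else B -` b \<inter> space M)" for p
  have "indep_sets (\<lambda>p. sigma_sets (space M) (\<Union>i\<in>I p. S i)) UNIV"
    by (rule indep_sets_collect_sigma[OF indep_sets_mono_index[OF _ ind] Sint])
       (use disj in \<open>auto simp: disjoint_family_on_def I_def\<close>)
  moreover have "E p \<in> sigma_sets (space M) (\<Union>i\<in>I p. S i)" for p
    using measurable_sets[OF A a] measurable_sets[OF B b]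
    by (cases p) (auto simp: E_def I_def space_measure_of_conv sets_measure_of[OF sub])
  ultimately have "prob (\<Inter>p\<in>UNIV. E p) = (\<Prod>p\<in>UNIV. prob (E p))"
    by (intro indep_setsD) auto
  then show ?thesis
    by (simp add: UNIV_bool E_def Int_commute mult.commute)
qed

lemma (in prob_space) nn_integral_indep_pair:
  assumes A: "A \<in> measurable M MA" and B: "B \<in> measurable M MB"
    and ind: "\<And>a b. a \<in> sets MA \<Longrightarrow> b \<in> sets MB \<Longrightarrow>
       prob ((A -` a \<inter> space M) \<inter> (B -` b \<inter> space M)) = prob (A -` a \<inter> space M) * prob (B -` b \<inter> space M)"
    and F: "F \<in> borel_measurable (MA \<Otimes>\<^sub>M MB)"
  shows "(\<integral>\<^sup>+ w. F (A w, B w) \<partial>M) = (\<integral>\<^sup>+ a. (\<integral>\<^sup>+ w. F (a, B w) \<partial>M) \<partial>distr M MA A)"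
proof -
  have AB: "(\<lambda>x. (A x, B x)) \<in> measurable M (MA \<Otimes>\<^sub>M MB)" using A B by (rule measurable_Pair)
  interpret XA: prob_space "distr M MA A" by (rule prob_space_distr) fact
  interpret XB: prob_space "distr M MB B" by (rule prob_space_distr) fact
  interpret XY: pair_prob_space "distr M MA A" "distr M MB B" ..
  have eq: "distr M MA A \<Otimes>\<^sub>M distr M MB B = distr M (MA \<Otimes>\<^sub>M MB) (\<lambda>x. (A x, B x))"
  proof (rule pair_measure_eqI)
    fix a b assume a: "a \<in> sets (distr M MA A)" and b: "b \<in> sets (distr M MB B)"
    have "(\<lambda>x. (A x, B x)) -` (a \<times> b) \<inter> space M = (A -` a \<inter> space M) \<inter> (B -` b \<inter> space M)" by auto
    then show "emeasure (distr M MA A) a * emeasure (distr M MB B) b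
        = emeasure (distr M (MA \<Otimes>\<^sub>M MB) (\<lambda>x. (A x, B x))) (a \<times> b)"
      using A B AB a b ind[of a b]
      by (simp add: emeasure_distr emeasure_eq_measure measure_nonneg ennreal_mult)
  qed (simp_all add: XA.sigma_finite_measure_axioms XB.sigma_finite_measure_axioms)
  have "(\<integral>\<^sup>+ w. F (A w, B w) \<partial>M) = (\<integral>\<^sup>+ p. F p \<partial>(distr M MA A \<Otimes>\<^sub>M distr M MB B))"
    unfolding eq using AB F by (subst nn_integral_distr) auto
  also have "\<dots> = (\<integral>\<^sup>+ a. \<integral>\<^sup>+ b. F (a, b) \<partial>distr M MB B \<partial>distr M MA A)"
    using F by (intro XB.nn_integral_fst[symmetric]) (simp cong: measurable_cong_sets)
  also have "\<dots> = (\<integral>\<^sup>+ a. (\<integral>\<^sup>+ w. F (a, B w) \<partial>M) \<partial>distr M MA A)"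
    using B F by (intro nn_integral_cong) (auto intro: measurable_Pair2 simp: nn_integral_distr)
  finally show ?thesis .
qed

lemma exponential_laplace:
  assumes H: "distributed M lborel X (exponential_density 1)" and t: "0 \<le> t"
  shows "(\<integral>\<^sup>+ w. enn_exp_neg (ennreal (t * X w)) \<partial>M) = ennreal (1 / (1 + t))"
proof -
  have density: "ennreal (exponential_density 1 x) * enn_exp_neg (ennreal (t * x))
      = ennreal (1 / (1 + t)) * ennreal (exponential_density (1 + t) x)" for x :: real
  proof (cases "x < 0")
    case False
    have "exp (- x) * exp (- (t * x)) = exp (- x * (1 + t))"
      by (simp add: exp_add[symmetric] algebra_simps)
    also have "\<dots> = 1 / (1 + t) * ((1 + t) * exp (- x * (1 + t)))"
      using t by simp
    finally have "exp (- x) * exp (- (t * x)) = 1 / (1 + t) * ((1 + t) * exp (- x * (1 + t)))" .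
    then show ?thesis
      using False t by (simp add: exponential_density_def enn_exp_neg_ennreal flip: ennreal_mult)
  qed (simp add: exponential_density_def)
  interpret Exp: prob_space "density lborel (exponential_density (1 + t))"
    by (rule prob_space_exponential_density) (use t in simp)
  have "(\<integral>\<^sup>+ w. enn_exp_neg (ennreal (t * X w)) \<partial>M)
      = (\<integral>\<^sup>+ x. ennreal (exponential_density 1 x) * enn_exp_neg (ennreal (t * x)) \<partial>lborel)"
    by (rule distributed_nn_integral[OF H, symmetric]) measurable
  also have "\<dots> = (\<integral>\<^sup>+ x. ennreal (1 / (1 + t)) * ennreal (exponential_density (1 + t) x) \<partial>lborel)"
    by (simp only: density)
  also have "\<dots> = ennreal (1 / (1 + t)) * emeasure (density lborel (exponential_density (1 + t))) UNIV"
    by (simp add: nn_integral_cmult emeasure_density)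
  finally show ?thesis
    using Exp.emeasure_space_1 by simp
qed

lemma le_powr_inverse_iff:
  fixes r L a :: real
  assumes "0 < a" "0 \<le> r" "0 \<le> L"
  shows "r \<le> L powr (1 / a) \<longleftrightarrow> r powr a \<le> L"
proof
  assume "r \<le> L powr (1 / a)"
  then have "r powr a \<le> (L powr (1 / a)) powr a" using assms by (intro powr_mono2) auto
  then show "r powr a \<le> L" using assms by (simp add: powr_powr)
next
  assume "r powr a \<le> L"
  then have "(r powr a) powr (1 / a) \<le> L powr (1 / a)" using assms by (intro powr_mono2) auto
  then show "r \<le> L powr (1 / a)" using assms by (simp add: powr_powr)
qed

lemma borel_measurable_ell [measurable]: "ell Pc \<beta> D \<in> borel_measurable borel"
  unfolding ell_def[abs_def] by measurable

lemma cluster_kernel_props: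
  assumes "(\<exists>a>0. f = matern_f a) \<or> (\<exists>\<sigma>>0. f = thomas_f \<sigma>)"
  shows "f \<in> borel_measurable borel \<and> (\<forall>r. 0 \<le> f r) \<and> (\<exists>C. \<forall>r. f r \<le> C)"
  using assms
proof (elim disjE exE conjE)
  fix a :: real assume a: "0 < a" "f = matern_f a"
  have "f \<in> borel_measurable borel" unfolding a matern_f_def[abs_def] by measurable
  then show ?thesis using a by (auto simp: matern_f_def)
next
  fix \<sigma> :: real assume \<sigma>: "0 < \<sigma>" "f = thomas_f \<sigma>"
  have "f \<in> borel_measurable borel" unfolding \<sigma> thomas_f_def[abs_def] by measurable
  moreover have "f r \<le> 1 / (2 * pi * \<sigma>\<^sup>2)" for r
    using \<sigma> by (simp add: thomas_f_def divide_le_cancel mult_le_cancel_left1 mult_less_0_iff)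
  ultimately show ?thesis using \<sigma> by (auto simp: thomas_f_def)
qed

locale clustered_interference =
  fixes M :: "'w measure"
    and lam_pb cbar D \<beta> \<eta> g Pc \<alpha>1 \<alpha>2 s :: real
    and f :: "real \<Rightarrow> real"
    and z :: "real^2"
    and Y :: "nat \<Rightarrow> 'w \<Rightarrow> real^2"
    and K :: "nat \<Rightarrow> 'w \<Rightarrow> nat"
    and V :: "nat \<Rightarrow> nat \<Rightarrow> 'w \<Rightarrow> real^2"
    and h :: "nat \<Rightarrow> nat \<Rightarrow> 'w \<Rightarrow> real"
  assumes M: "prob_space M"
    and params: "lam_pb > 0" "cbar > 0" "0 < D" "D \<le> 1" "0 < \<beta>" "\<beta> \<le> 1"
                "\<eta> > 0" "g > 0" "Pc > 0" "\<alpha>1 > 0" "\<alpha>2 > 0"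
    and f_choice: "(\<exists>a>0. f = matern_f a) \<or> (\<exists>\<sigma>>0. f = thomas_f \<sigma>)"
    and s_nonneg: "s \<ge> 0"
    \<comment> \<open>the beacon process is encoded by an enumeration \<open>Y 0, Y 1, \<dots>\<close> of its points\<close>
    and Y_meas: "\<And>k. Y k \<in> borel_measurable M"
    and Y_inj: "AE w in M. inj (\<lambda>k. Y k w)"
    and Y_PPP: "is_PPP M (\<lambda>w. range (\<lambda>k. Y k w)) (density lborel (\<lambda>_. ennreal lam_pb))"
    \<comment> \<open>the nodes of cluster k sit at \<open>Y k + V k j\<close> for \<open>j < K k\<close>\<close>
    and K_meas: "\<And>k. K k \<in> measurable M (count_space UNIV)"
    and V_meas: "\<And>k j. V k j \<in> borel_measurable M"
    and V_inj: "\<And>k. AE w in M. inj_on (\<lambda>j. V k j w) {..<K k w}"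
    and V_PPP: "\<And>k. is_PPP M (\<lambda>w. (\<lambda>j. V k j w) ` {..<K k w})
                   (density lborel (\<lambda>x. ennreal (cbar * D * f (norm x))))"
    and h_exp: "\<And>k j. distributed M lborel (h k j) (exponential_density 1)"
    and indep: "prob_space.indep_sets M
        (\<lambda>i. case i of
            Par \<Rightarrow> sets (vimage_algebra (space M) (\<lambda>w k. Y k w) (Pi\<^sub>M UNIV (\<lambda>_. borel)))
          | Clu k \<Rightarrow> sets (vimage_algebra (space M) (\<lambda>w. (K k w, \<lambda>j. V k j w))
                       (count_space UNIV \<Otimes>\<^sub>M Pi\<^sub>M UNIV (\<lambda>_. borel)))
          | Fad k j \<Rightarrow> sets (vimage_algebra (space M) (h k j) borel)) UNIV"

sublocale clustered_interference \<subseteq> prob_space M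
  by (rule M)

context clustered_interference
begin

abbreviation parent_space :: "(nat \<Rightarrow> real^2) measure"
  where "parent_space \<equiv> Pi\<^sub>M UNIV (\<lambda>_. borel)"

abbreviation cluster_space :: "(nat \<times> (nat \<Rightarrow> real^2)) measure"
  where "cluster_space \<equiv> count_space UNIV \<Otimes>\<^sub>M Pi\<^sub>M UNIV (\<lambda>_. borel)"

abbreviation fading_space :: "(nat \<Rightarrow> real) measure"
  where "fading_space \<equiv> Pi\<^sub>M UNIV (\<lambda>_. borel)"

abbreviation "mark_space \<equiv> cluster_space \<Otimes>\<^sub>M fading_space"

definition model_sets :: "model_idx \<Rightarrow> 'w set set" where
  "model_sets i = (case i of
      Par \<Rightarrow> sets (vimage_algebra (space M) (\<lambda>w k. Y k w) parent_space)
    | Clu k \<Rightarrow> sets (vimage_algebra (space M) (\<lambda>w. (K k w, \<lambda>j. V k j w)) cluster_space)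
    | Fad k j \<Rightarrow> sets (vimage_algebra (space M) (h k j) borel))"

definition cluster :: "nat \<Rightarrow> 'w \<Rightarrow> nat \<times> (nat \<Rightarrow> real^2)"
  where "cluster k w = (K k w, \<lambda>j. V k j w)"

definition fading :: "nat \<Rightarrow> 'w \<Rightarrow> nat \<Rightarrow> real"
  where "fading k w = (\<lambda>j. h k j w)"

definition mark :: "nat \<Rightarrow> 'w \<Rightarrow> (nat \<times> (nat \<Rightarrow> real^2)) \<times> (nat \<Rightarrow> real)"
  where "mark k w = (cluster k w, fading k w)"

lemma indep_model_sets: "indep_sets model_sets UNIV"
  using indep unfolding model_sets_def[abs_def] .

lemma measurable_parents: "(\<lambda>w k. Y k w) \<in> measurable M parent_space"
  by (rule measurable_abs_UNIV) (rule Y_meas)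

lemma measurable_cluster: "cluster k \<in> measurable M cluster_space"
  unfolding cluster_def[abs_def] using K_meas V_meas by (intro measurable_Pair measurable_abs_UNIV)

lemma measurable_fading_var: "h k j \<in> borel_measurable M"
  using distributed_measurable[OF h_exp] by simp

lemma model_sets_events: "model_sets i \<subseteq> events"
  using measurable_parents measurable_cluster measurable_fading_var
  by (cases i) (auto simp: model_sets_def cluster_def[abs_def] sets_vimage_algebra2 measurable_def)

lemma Int_stable_model_sets: "Int_stable (model_sets i)"
  by (cases i) (auto simp: model_sets_def Int_stable_def)

lemma measurable_sigma_model_sets:
  assumes F: "F \<in> measurable M N" and i: "i \<in> I" and sub: "sets (vimage_algebra (space M) F N) \<subseteq> model_sets i"
  shows "F \<in> measurable (sigma (space M) (\<Union>i\<in>I. model_sets i)) N"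
proof (rule measurable_sigma_of_vimage_subset)
  show "F \<in> space M \<rightarrow> space N" using measurable_space[OF F] by auto
  show "sets (vimage_algebra (space M) F N) \<subseteq> (\<Union>i\<in>I. model_sets i)" using sub i by blast
  show "(\<Union>i\<in>I. model_sets i) \<subseteq> Pow (space M)"
    using model_sets_events sets.sets_into_space by blast
qed

lemma measurable_sigma_mark:
  assumes "Clu k \<in> I" and "range (Fad k) \<subseteq> I"
  shows "mark k \<in> measurable (sigma (space M) (\<Union>i\<in>I. model_sets i)) mark_space"
proof -
  have "h k j \<in> borel_measurable (sigma (space M) (\<Union>i\<in>I. model_sets i))" for j
    using assms(2) by (intro measurable_sigma_model_sets[OF measurable_fading_var]) (auto simp: model_sets_def)
  moreover have "cluster k \<in> measurable (sigma (space M) (\<Union>i\<in>I. model_sets i)) cluster_space"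
    using assms(1) by (intro measurable_sigma_model_sets[OF measurable_cluster])
      (auto simp: model_sets_def cluster_def[abs_def])
  ultimately show ?thesis
    unfolding mark_def[abs_def] fading_def[abs_def] by (intro measurable_Pair measurable_abs_UNIV)
qed

lemma measurable_mark: "mark k \<in> measurable M mark_space"
  unfolding mark_def[abs_def] fading_def[abs_def]
  using measurable_cluster measurable_fading_var by (intro measurable_Pair measurable_abs_UNIV)

lemmas indep_pair_model = indep_pair_collect_sigma[OF indep_model_sets model_sets_events Int_stable_model_sets]
lemmas indep_vars_model = indep_vars_collect_sigma[OF indep_model_sets model_sets_events Int_stable_model_sets]

lemma nn_integral_parents_marks:
  assumes "F \<in> borel_measurable (parent_space \<Otimes>\<^sub>M Pi\<^sub>M UNIV (\<lambda>_. mark_space))"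
  shows "(\<integral>\<^sup>+ w. F (\<lambda>k. Y k w, \<lambda>k. mark k w) \<partial>M)
       = (\<integral>\<^sup>+ y. (\<integral>\<^sup>+ w. F (y, \<lambda>k. mark k w) \<partial>M) \<partial>distr M parent_space (\<lambda>w k. Y k w))"
proof (rule nn_integral_indep_pair[OF measurable_parents _ indep_pair_model assms])
  show "(\<lambda>w k. mark k w) \<in> measurable M (Pi\<^sub>M UNIV (\<lambda>_. mark_space))"
    by (intro measurable_abs_UNIV measurable_mark)
  show "(\<lambda>w k. Y k w) \<in> measurable (sigma (space M) (\<Union>i\<in>{Par}. model_sets i)) parent_space"
    by (intro measurable_sigma_model_sets[OF measurable_parents]) (auto simp: model_sets_def)
  show "(\<lambda>w k. mark k w) \<in> measurable (sigma (space M) (\<Union>i\<in>- {Par}. model_sets i)) (Pi\<^sub>M UNIV (\<lambda>_. mark_space))"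
    by (intro measurable_abs_UNIV measurable_sigma_mark) auto
qed auto

lemma nn_integral_cluster_fading:
  assumes "F \<in> borel_measurable mark_space"
  shows "(\<integral>\<^sup>+ w. F (mark k w) \<partial>M) = (\<integral>\<^sup>+ c. (\<integral>\<^sup>+ w. F (c, fading k w) \<partial>M) \<partial>distr M cluster_space (cluster k))"
  unfolding mark_def
proof (rule nn_integral_indep_pair[OF measurable_cluster _ indep_pair_model assms])
  show fading: "fading k \<in> measurable M fading_space"
    unfolding fading_def[abs_def] by (intro measurable_abs_UNIV measurable_fading_var)
  show "cluster k \<in> measurable (sigma (space M) (\<Union>i\<in>{Clu k}. model_sets i)) cluster_space"
    by (intro measurable_sigma_model_sets[OF measurable_cluster])
      (auto simp: model_sets_def cluster_def[abs_def])
  show "fading k \<in> measurable (sigma (space M) (\<Union>i\<in>range (Fad k). model_sets i)) fading_space"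
    unfolding fading_def[abs_def]
    by (intro measurable_abs_UNIV measurable_sigma_model_sets[OF measurable_fading_var])
      (auto simp: model_sets_def)
qed auto

lemma indep_vars_marks: "indep_vars (\<lambda>_. mark_space) mark UNIV"
proof (rule indep_vars_model[where I="\<lambda>k. insert (Clu k) (range (Fad k))"])
  show "mark k \<in> measurable (sigma (space M) (\<Union>i\<in>insert (Clu k) (range (Fad k)). model_sets i)) mark_space" for k
    by (rule measurable_sigma_mark) auto
qed (auto simp: disjoint_family_on_def)

lemma indep_vars_fading: "indep_vars (\<lambda>_. borel) (h k) UNIV"
proof (rule indep_vars_model[where I="\<lambda>j. {Fad k j}"])
  show "h k j \<in> borel_measurable (sigma (space M) (\<Union>i\<in>{Fad k j}. model_sets i))" for j
    by (rule measurable_sigma_model_sets[OF measurable_fading_var]) (auto simp: model_sets_def)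
qed (auto simp: disjoint_family_on_def)

definition path_gain :: "real^2 \<Rightarrow> real^2 \<Rightarrow> real" where
  "path_gain y x = \<beta> * ell Pc \<beta> D (\<eta> * g * norm x powr (- \<alpha>1)) * norm (y + x - z) powr (- \<alpha>2)"

definition cluster_interference :: "real^2 \<Rightarrow> (nat \<times> (nat \<Rightarrow> real^2)) \<times> (nat \<Rightarrow> real) \<Rightarrow> ennreal" where
  "cluster_interference y m = (\<Sum>j<fst (fst m). ennreal (path_gain y (snd (fst m) j) * snd m j))"

definition node_exponent :: "real^2 \<Rightarrow> real^2 \<Rightarrow> ennreal" where
  "node_exponent y x = ennreal (ln (1 + s * path_gain y x))"

definition cluster_exponent :: "real^2 \<Rightarrow> ennreal" where
  "cluster_exponent y =
     (\<integral>\<^sup>+ x. ennreal (cbar * D * f (norm x)) * (1 - enn_exp_neg (node_exponent y x)) \<partial>lborel)"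

lemma f_measurable [measurable]: "f \<in> borel_measurable borel"
  and f_nonneg: "0 \<le> f r"
  and f_bounded: "\<exists>C. \<forall>r. f r \<le> C"
  using cluster_kernel_props[OF f_choice] by blast+

lemma path_gain_nonneg: "0 \<le> path_gain y x"
  using params unfolding path_gain_def ell_def by simp

lemma borel_measurable_path_gain [measurable]:
  "(\<lambda>p. path_gain (fst p) (snd p)) \<in> borel_measurable (borel \<Otimes>\<^sub>M borel)"
  unfolding path_gain_def by measurable

lemma borel_measurable_cluster_interference:
  "(\<lambda>p. cluster_interference (fst p) (snd p)) \<in> borel_measurable (borel \<Otimes>\<^sub>M mark_space)"
  unfolding cluster_interference_def path_gain_def by (rule borel_measurable_sum_lessThan_count) measurable

lemma borel_measurable_node_exponent [measurable]:
  "(\<lambda>p. node_exponent (fst p) (snd p)) \<in> borel_measurable (borel \<Otimes>\<^sub>M borel)"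
  unfolding node_exponent_def by measurable

lemma borel_measurable_cluster_exponent [measurable]: "cluster_exponent \<in> borel_measurable borel"
proof -
  have "(\<lambda>p. ennreal (cbar * D * f (norm (snd p))) * (1 - enn_exp_neg (node_exponent (fst p) (snd p))))
      \<in> borel_measurable (borel \<Otimes>\<^sub>M lborel)"
    by (simp cong: measurable_cong_sets)
  from lborel.borel_measurable_nn_integral_fst[OF this]
  show ?thesis unfolding cluster_exponent_def[abs_def] by simp
qed

lemma enn_exp_neg_node_exponent: "enn_exp_neg (node_exponent y x) = ennreal (1 / (1 + s * path_gain y x))"
proof -
  have "0 \<le> s * path_gain y x" using s_nonneg path_gain_nonneg by simp
  then show ?thesis
    by (simp add: node_exponent_def enn_exp_neg_ennreal exp_minus inverse_eq_divide)
qed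

lemma laplace_given_cluster:
  "(\<integral>\<^sup>+ w. enn_exp_neg (ennreal s * cluster_interference y ((n, v), fading k w)) \<partial>M)
     = enn_exp_neg (\<Sum>j<n. node_exponent y (v j))"
proof -
  define t where "t j = s * path_gain y (v j)" for j
  have t: "0 \<le> t j" for j unfolding t_def using s_nonneg path_gain_nonneg by simp
  have "indep_vars (\<lambda>_. borel) (\<lambda>j w. enn_exp_neg (ennreal (t j * h k j w))) {..<n}"
    by (rule indep_vars_subset[OF indep_vars_compose2[OF indep_vars_fading]]) auto
  moreover have "ennreal s * cluster_interference y ((n, v), fading k w) = (\<Sum>j<n. ennreal (t j * h k j w))" for w
    using s_nonneg
    by (simp add: cluster_interference_def fading_def t_def sum_distrib_left mult.assoc flip: ennreal_mult')
  ultimately have "(\<integral>\<^sup>+ w. enn_exp_neg (ennreal s * cluster_interference y ((n, v), fading k w)) \<partial>M)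
      = (\<Prod>j<n. \<integral>\<^sup>+ w. enn_exp_neg (ennreal (t j * h k j w)) \<partial>M)"
    by (simp add: enn_exp_neg_sum indep_vars_nn_integral)
  also have "\<dots> = (\<Prod>j<n. enn_exp_neg (node_exponent y (v j)))"
    using t by (simp add: exponential_laplace[OF h_exp] enn_exp_neg_node_exponent t_def)
  finally show ?thesis by (simp add: enn_exp_neg_sum)
qed

lemma laplace_cluster:
  "(\<integral>\<^sup>+ w. enn_exp_neg (ennreal s * cluster_interference y (mark k w)) \<partial>M) = enn_exp_neg (cluster_exponent y)"
proof -
  have [measurable]: "cluster_interference y \<in> borel_measurable mark_space"
    using measurable_compose_Pair1[OF _ borel_measurable_cluster_interference] by simp
  have [measurable]: "(\<lambda>c. \<Sum>j<fst c. node_exponent y (snd c j)) \<in> borel_measurable cluster_space"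
    unfolding node_exponent_def path_gain_def by (rule borel_measurable_sum_lessThan_count) measurable
  have "(\<integral>\<^sup>+ w. enn_exp_neg (ennreal s * cluster_interference y (mark k w)) \<partial>M)
      = (\<integral>\<^sup>+ c. enn_exp_neg (\<Sum>j<fst c. node_exponent y (snd c j)) \<partial>distr M cluster_space (cluster k))"
    by (subst nn_integral_cluster_fading)
      (simp_all add: laplace_given_cluster[of y "fst c" "snd c" k for c, unfolded prod.collapse])
  also have "\<dots> = (\<integral>\<^sup>+ w. enn_exp_neg (\<Sum>j<K k w. node_exponent y (V k j w)) \<partial>M)"
    using measurable_cluster by (subst nn_integral_distr) (auto simp: cluster_def)
  also have "\<dots> = (\<integral>\<^sup>+ w. enn_exp_neg (\<integral>\<^sup>+ x. node_exponent y x * indicator ((\<lambda>j. V k j w) ` {..<K k w}) x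
                                              \<partial>count_space UNIV) \<partial>M)"
    using V_inj[of k]
    by (intro nn_integral_cong_AE) (auto elim!: AE_mp simp: nn_integral_indicator_finite sum.reindex)
  also have "\<dots> = enn_exp_neg (cluster_exponent y)"
  proof -
    obtain C where C: "\<And>r. f r \<le> C" using f_bounded by blast
    have "ennreal (cbar * D * f (norm x)) \<le> ennreal (cbar * D * C)" for x
      using params C by (intro ennreal_leI mult_left_mono) auto
    then show ?thesis unfolding cluster_exponent_def
      using measurable_compose_Pair1[OF _ borel_measurable_node_exponent]
      by (intro PPP_laplace_functional_density[OF M V_PPP]) auto
  qed
  finally show ?thesis .
qed

lemma laplace_given_parents:
  "(\<integral>\<^sup>+ w. enn_exp_neg (ennreal s * (\<Sum>k. cluster_interference (y k) (mark k w))) \<partial>M)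
     = enn_exp_neg (\<Sum>k. cluster_exponent (y k))"
proof -
  define G where "G n w = ennreal s * (\<Sum>k<n. cluster_interference (y k) (mark k w))" for n w
  have G_mono: "incseq (\<lambda>n. G n w)" for w
    unfolding G_def incseq_def by (intro allI impI mult_left_mono sum_mono2) auto
  have [measurable]: "(\<lambda>w. cluster_interference (y k) (mark k w)) \<in> borel_measurable M" for k
    using measurable_compose[OF measurable_mark measurable_compose_Pair1[OF _ borel_measurable_cluster_interference]]
    by simp
  have laplace_partial: "(\<integral>\<^sup>+ w. enn_exp_neg (G n w) \<partial>M) = enn_exp_neg (\<Sum>k<n. cluster_exponent (y k))" for n
  proof -
    have "indep_vars (\<lambda>_. borel) (\<lambda>k w. enn_exp_neg (ennreal s * cluster_interference (y k) (mark k w))) {..<n}"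
      using measurable_compose_Pair1[OF _ borel_measurable_cluster_interference]
      by (intro indep_vars_subset[OF indep_vars_compose2[OF indep_vars_marks]]) auto
    then show ?thesis
      by (simp add: G_def sum_distrib_left enn_exp_neg_sum indep_vars_nn_integral laplace_cluster)
  qed
  have "(\<integral>\<^sup>+ w. enn_exp_neg (ennreal s * (\<Sum>k. cluster_interference (y k) (mark k w))) \<partial>M)
      = (\<integral>\<^sup>+ w. (INF n. enn_exp_neg (G n w)) \<partial>M)"
    by (simp add: G_def suminf_eq_SUP SUP_mult_left_ennreal flip: enn_exp_neg_SUP[OF G_mono[unfolded G_def]])
  also have "\<dots> = (INF n. \<integral>\<^sup>+ w. enn_exp_neg (G n w) \<partial>M)"
  proof (rule nn_integral_monotone_convergence_INF_decseq)
    show "decseq (\<lambda>n w. enn_exp_neg (G n w))"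
      by (intro decseq_SucI le_funI enn_exp_neg_antimono incseq_SucD[OF G_mono])
    show "(\<integral>\<^sup>+ w. enn_exp_neg (G n w) \<partial>M) < \<infinity>" for n
      unfolding laplace_partial by (simp add: enn_exp_neg_def)
  qed (simp add: G_def)
  also have "\<dots> = enn_exp_neg (SUP n. \<Sum>k<n. cluster_exponent (y k))"
    by (simp add: laplace_partial enn_exp_neg_SUP incseq_def sum_mono2)
  finally show ?thesis by (simp add: suminf_eq_SUP)
qed

lemma laplace_parents:
  "(\<integral>\<^sup>+ w. enn_exp_neg (\<Sum>k. cluster_exponent (Y k w)) \<partial>M)
     = enn_exp_neg (\<integral>\<^sup>+ y. ennreal lam_pb * (1 - enn_exp_neg (cluster_exponent y)) \<partial>lborel)"
proof -
  have "(\<Sum>k. cluster_exponent (Y k w))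
      = (\<integral>\<^sup>+ y. cluster_exponent y * indicator (range (\<lambda>k. Y k w)) y \<partial>count_space UNIV)"
    if "inj (\<lambda>k. Y k w)" for w
  proof -
    have "(\<Sum>k. cluster_exponent (Y k w)) = (\<integral>\<^sup>+ k. cluster_exponent (Y k w) \<partial>count_space UNIV)"
      by (rule nn_integral_count_space_nat[symmetric])
    also have "\<dots> = (\<integral>\<^sup>+ y. cluster_exponent y \<partial>count_space (range (\<lambda>k. Y k w)))"
      using that by (intro nn_integral_bij_count_space) (simp add: bij_betw_def)
    finally show ?thesis by (simp add: nn_integral_count_space_indicator)
  qed
  then have "(\<integral>\<^sup>+ w. enn_exp_neg (\<Sum>k. cluster_exponent (Y k w)) \<partial>M)
      = (\<integral>\<^sup>+ w. enn_exp_neg (\<integral>\<^sup>+ y. cluster_exponent y * indicator (range (\<lambda>k. Y k w)) y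
                                   \<partial>count_space UNIV) \<partial>M)"
    using Y_inj by (intro nn_integral_cong_AE) (auto elim!: AE_mp)
  also have "\<dots> = enn_exp_neg (\<integral>\<^sup>+ y. ennreal lam_pb * (1 - enn_exp_neg (cluster_exponent y)) \<partial>lborel)"
    by (rule PPP_laplace_functional_density[OF M Y_PPP]) auto
  finally show ?thesis .
qed

lemma laplace_interference_given_parents:
  "(\<integral>\<^sup>+ w. enn_exp_neg (ennreal s * (\<Sum>k. cluster_interference (Y k w) (mark k w))) \<partial>M)
     = (\<integral>\<^sup>+ w. enn_exp_neg (\<Sum>k. cluster_exponent (Y k w)) \<partial>M)"
proof -
  have [measurable]: "(\<lambda>p. cluster_interference (fst p k) (snd p k))
      \<in> borel_measurable (parent_space \<Otimes>\<^sub>M Pi\<^sub>M UNIV (\<lambda>_. mark_space))" for k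
    using measurable_compose[OF _ borel_measurable_cluster_interference, of "\<lambda>p. (fst p k, snd p k)"]
    by simp
  have "(\<integral>\<^sup>+ w. enn_exp_neg (ennreal s * (\<Sum>k. cluster_interference (Y k w) (mark k w))) \<partial>M)
      = (\<integral>\<^sup>+ y. enn_exp_neg (\<Sum>k. cluster_exponent (y k)) \<partial>distr M parent_space (\<lambda>w k. Y k w))"
    using nn_integral_parents_marks[where F="\<lambda>p. enn_exp_neg (ennreal s * (\<Sum>k. cluster_interference (fst p k) (snd p k)))"]
    by (simp add: laplace_given_parents)
  also have "\<dots> = (\<integral>\<^sup>+ w. enn_exp_neg (\<Sum>k. cluster_exponent (Y k w)) \<partial>M)"
    using measurable_parents by (subst nn_integral_distr) auto
  finally show ?thesis .
qed

abbreviation active_region :: "(real^2) set"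
  where "active_region \<equiv> regionO \<eta> g \<beta> D Pc \<alpha>1"

definition q_kernel :: "real^2 \<Rightarrow> real^2 \<Rightarrow> real" where
  "q_kernel y x = s * \<beta> * \<eta> * g / (s * \<beta> * \<eta> * g + norm x powr \<alpha>1 * norm (x + y - z) powr \<alpha>2) * f (norm x)"

lemma mem_active_region_iff:
  "x \<in> active_region \<longleftrightarrow> norm x powr \<alpha>1 \<le> \<eta> * g * (1 - \<beta> * D) / Pc"
proof -
  have "\<beta> * D \<le> 1" using params by (simp add: mult_le_one)
  then show ?thesis
    using params by (simp add: regionO_def le_powr_inverse_iff)
qed

lemma node_factor_eq:
  assumes x: "x \<noteq> 0" and xy: "x + y - z \<noteq> 0"
  shows "f (norm x) * (s * path_gain y x / (1 + s * path_gain y x))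
       = indicator (active_region) x * q_kernel y x"
proof (cases "\<beta> * D < 1 \<and> norm x powr \<alpha>1 \<le> \<eta> * g * (1 - \<beta> * D) / Pc")
  case True
  define A where "A = norm x powr \<alpha>1"
  define B where "B = norm (x + y - z) powr \<alpha>2"
  have A: "0 < A" and B: "0 < B" using x xy by (simp_all add: A_def B_def)
  have "Pc / (1 - \<beta> * D) \<le> \<eta> * g / A"
    using True A params by (simp add: A_def divide_le_eq le_divide_eq mult.commute)
  then have pg: "path_gain y x = \<beta> * \<eta> * g / (A * B)"
    using True by (simp add: path_gain_def ell_def A_def B_def add.commute powr_minus divide_inverse)
  have "s * path_gain y x / (1 + s * path_gain y x) = s * \<beta> * \<eta> * g / (s * \<beta> * \<eta> * g + A * B)"
    unfolding pg using A B by (simp add: field_simps)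
  then show ?thesis
    using True by (simp add: q_kernel_def mem_active_region_iff A_def B_def)
next
  case False
  have "\<eta> * g * norm x powr (- \<alpha>1) < Pc / (1 - \<beta> * D)" if bD: "\<beta> * D < 1"
  proof -
    define A where "A = norm x powr \<alpha>1"
    have A: "0 < A" using x by (simp add: A_def)
    have "\<eta> * g * (1 - \<beta> * D) < A * Pc"
      using False bD params by (simp add: A_def not_le divide_less_eq)
    then have "\<eta> * g / A < Pc / (1 - \<beta> * D)"
      using A bD by (simp add: field_simps)
    then show ?thesis by (simp add: A_def powr_minus divide_inverse)
  qed
  then have "path_gain y x = 0" by (auto simp: path_gain_def ell_def)
  \<comment> \<open>outside O the harvested power is below the activation threshold\<close>
  moreover have "x \<notin> active_region"
  proof (cases "\<beta> * D < 1")
    case False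
    with params have "\<beta> * D = 1" by (simp add: mult_le_one antisym_conv2)
    then show ?thesis using x by (simp add: mem_active_region_iff)
  qed (use False in \<open>simp add: mem_active_region_iff\<close>)
  ultimately show ?thesis by simp
qed

lemma q_kernel_nonneg: "0 \<le> q_kernel y x"
  unfolding q_kernel_def using params s_nonneg f_nonneg by simp

lemma q_kernel_le: "q_kernel y x \<le> f (norm x)"
proof -
  have "a / (a + b) \<le> 1" if "0 \<le> a" "0 \<le> b" for a b :: real
    using that by (cases "a + b = 0") (auto simp: divide_le_eq)
  then have "s * \<beta> * \<eta> * g / (s * \<beta> * \<eta> * g + norm x powr \<alpha>1 * norm (x + y - z) powr \<alpha>2) \<le> 1"
    using params s_nonneg by simp
  then show ?thesis
    unfolding q_kernel_def using params s_nonneg by (intro mult_left_le_one_le f_nonneg) auto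
qed

lemma integrable_q_kernel: "integrable lborel (\<lambda>x. indicator (active_region) x *\<^sub>R q_kernel y x)"
proof -
  obtain C where C: "\<And>r. f r \<le> C" using f_bounded by blast
  have C0: "0 \<le> C" using order_trans[OF f_nonneg C] .
  have "active_region = cball 0 ((\<eta> * g * (1 - \<beta> * D) / Pc) powr (1 / \<alpha>1))"
    by (auto simp: regionO_def)
  then have "integrable lborel (\<lambda>x. C * indicator (active_region) x)"
    using emeasure_lborel_cball_finite by (intro integrable_mult_right integrable_real_indicator) auto
  then show ?thesis
  proof (rule Bochner_Integration.integrable_bound)
    show "(\<lambda>x. indicator (active_region) x *\<^sub>R q_kernel y x) \<in> borel_measurable lborel"
      unfolding q_kernel_def regionO_def by measurable
    show "AE x in lborel. norm (indicator (active_region) x *\<^sub>R q_kernel y x)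
        \<le> norm (C * indicator (active_region) x)"
      using C0 by (intro AE_I2) (simp add: indicator_def q_kernel_nonneg order_trans[OF q_kernel_le C])
  qed
qed

lemma cluster_exponent_eq: "cluster_exponent y = ennreal (cbar * D * qfun \<eta> g \<beta> D Pc \<alpha>1 \<alpha>2 f s y z)"
proof -
  have cD: "0 \<le> cbar * D" using params by simp
  have "ennreal (cbar * D * f (norm x)) * (1 - enn_exp_neg (node_exponent y x))
      = ennreal (cbar * D * (indicator (active_region) x * q_kernel y x))"
    if x: "x \<noteq> 0" and xy: "x \<noteq> z - y" for x
  proof -
    have t: "0 \<le> s * path_gain y x" using s_nonneg path_gain_nonneg by simp
    then have "1 - enn_exp_neg (node_exponent y x) = ennreal (1 - 1 / (1 + s * path_gain y x))"
      by (simp add: enn_exp_neg_node_exponent ennreal_minus[symmetric] del: ennreal_1 flip: ennreal_1)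
    also have "1 - 1 / (1 + s * path_gain y x) = s * path_gain y x / (1 + s * path_gain y x)"
      using t by (simp add: field_simps)
    finally have "1 - enn_exp_neg (node_exponent y x) = ennreal (s * path_gain y x / (1 + s * path_gain y x))" .
    moreover have "x + y - z \<noteq> 0" using xy by (simp add: algebra_simps)
    then have "cbar * D * f (norm x) * (s * path_gain y x / (1 + s * path_gain y x))
        = cbar * D * (indicator (active_region) x * q_kernel y x)"
      using node_factor_eq[OF x] by (metis mult.assoc)
    ultimately show ?thesis
      using cD f_nonneg by (simp flip: ennreal_mult')
  qed
  then have "cluster_exponent y
      = (\<integral>\<^sup>+ x. ennreal (cbar * D * (indicator (active_region) x * q_kernel y x)) \<partial>lborel)"
    unfolding cluster_exponent_def
    using AE_lborel_singleton[of 0] AE_lborel_singleton[of "z - y"]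
    by (intro nn_integral_cong_AE) (auto elim!: AE_mp)
  also have "\<dots> = ennreal (cbar * D) * (\<integral>\<^sup>+ x. ennreal (indicator (active_region) x *\<^sub>R q_kernel y x) \<partial>lborel)"
    using borel_measurable_integrable[OF integrable_q_kernel]
    by (subst nn_integral_cmult[symmetric]) (auto simp: ennreal_mult'[OF cD])
  also have "(\<integral>\<^sup>+ x. ennreal (indicator (active_region) x *\<^sub>R q_kernel y x) \<partial>lborel)
      = ennreal (\<integral>x. indicator (active_region) x *\<^sub>R q_kernel y x \<partial>lborel)"
    by (rule nn_integral_eq_integral[OF integrable_q_kernel]) (simp add: q_kernel_nonneg)
  finally show ?thesis
    by (simp add: qfun_def set_lebesgue_integral_def q_kernel_def ennreal_mult'[OF cD])
qed

end

theorem lemma2: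
  fixes M :: "'w measure"
    and lam_pb cbar D \<beta> \<eta> g Pc \<alpha>1 \<alpha>2 s :: real
    and f :: "real \<Rightarrow> real"
    and z :: "real^2"
    and Y :: "nat \<Rightarrow> 'w \<Rightarrow> real^2"
    and K :: "nat \<Rightarrow> 'w \<Rightarrow> nat"
    and V :: "nat \<Rightarrow> nat \<Rightarrow> 'w \<Rightarrow> real^2"
    and h :: "nat \<Rightarrow> nat \<Rightarrow> 'w \<Rightarrow> real"
  assumes M: "prob_space M"
    and params: "lam_pb > 0" "cbar > 0" "0 < D" "D \<le> 1" "0 < \<beta>" "\<beta> \<le> 1"
                "\<eta> > 0" "g > 0" "Pc > 0" "\<alpha>1 > 0" "\<alpha>2 > 0"
    and f_choice: "(\<exists>a>0. f = matern_f a) \<or> (\<exists>\<sigma>>0. f = thomas_f \<sigma>)"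
    and s_nonneg: "s \<ge> 0"
    and Y_meas: "\<And>k. Y k \<in> borel_measurable M"
    and Y_inj: "AE w in M. inj (\<lambda>k. Y k w)"
    and Y_PPP: "is_PPP M (\<lambda>w. range (\<lambda>k. Y k w)) (density lborel (\<lambda>_. ennreal lam_pb))"
    and K_meas: "\<And>k. K k \<in> measurable M (count_space UNIV)"
    and V_meas: "\<And>k j. V k j \<in> borel_measurable M"
    and V_inj: "\<And>k. AE w in M. inj_on (\<lambda>j. V k j w) {..<K k w}"
    and V_PPP: "\<And>k. is_PPP M (\<lambda>w. (\<lambda>j. V k j w) ` {..<K k w})
                   (density lborel (\<lambda>x. ennreal (cbar * D * f (norm x))))"
    and h_exp: "\<And>k j. distributed M lborel (h k j) (exponential_density 1)"
    and indep: "prob_space.indep_sets M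
        (\<lambda>i. case i of
            Par \<Rightarrow> sets (vimage_algebra (space M) (\<lambda>w k. Y k w) (Pi\<^sub>M UNIV (\<lambda>_. borel)))
          | Clu k \<Rightarrow> sets (vimage_algebra (space M) (\<lambda>w. (K k w, \<lambda>j. V k j w))
                       (count_space UNIV \<Otimes>\<^sub>M Pi\<^sub>M UNIV (\<lambda>_. borel)))
          | Fad k j \<Rightarrow> sets (vimage_algebra (space M) (h k j) borel)) UNIV"
  shows "(\<integral>\<^sup>+ w. enn_exp_neg (ennreal s *
            (\<Sum>k. \<Sum>j<K k w. ennreal (\<beta> * ell Pc \<beta> D (\<eta> * g * norm (V k j w) powr (- \<alpha>1))
                                 * h k j w * norm (Y k w + V k j w - z) powr (- \<alpha>2)))) \<partial>M)
         = enn_exp_neg (ennreal lam_pb *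
            (\<integral>\<^sup>+ y. ennreal (1 - exp (- (cbar * D * qfun \<eta> g \<beta> D Pc \<alpha>1 \<alpha>2 f s y z))) \<partial>lborel))"
proof -
  interpret clustered_interference M lam_pb cbar D \<beta> \<eta> g Pc \<alpha>1 \<alpha>2 s f z Y K V h
    by (rule clustered_interference.intro) (rule assms)+
  have "(\<Sum>j<K k w. ennreal (\<beta> * ell Pc \<beta> D (\<eta> * g * norm (V k j w) powr (- \<alpha>1))
                              * h k j w * norm (Y k w + V k j w - z) powr (- \<alpha>2)))
      = cluster_interference (Y k w) (mark k w)" for k w
    by (simp add: cluster_interference_def mark_def cluster_def fading_def path_gain_def ac_simps)
  then have "(\<integral>\<^sup>+ w. enn_exp_neg (ennreal s *
            (\<Sum>k. \<Sum>j<K k w. ennreal (\<beta> * ell Pc \<beta> D (\<eta> * g * norm (V k j w) powr (- \<alpha>1))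
                                 * h k j w * norm (Y k w + V k j w - z) powr (- \<alpha>2)))) \<partial>M)
      = enn_exp_neg (\<integral>\<^sup>+ y. ennreal lam_pb * (1 - enn_exp_neg (cluster_exponent y)) \<partial>lborel)"
    by (simp add: laplace_interference_given_parents laplace_parents)
  also have "\<dots> = enn_exp_neg (ennreal lam_pb * (\<integral>\<^sup>+ y. 1 - enn_exp_neg (cluster_exponent y) \<partial>lborel))"
    by (subst nn_integral_cmult) auto
  also have "\<dots> = enn_exp_neg (ennreal lam_pb *
      (\<integral>\<^sup>+ y. ennreal (1 - exp (- (cbar * D * qfun \<eta> g \<beta> D Pc \<alpha>1 \<alpha>2 f s y z))) \<partial>lborel))"
    by (simp add: cluster_exponent_eq ennreal_one_minus_enn_exp_neg)
  finally show ?thesis .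
qed

end
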